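(* Consider the system on an Erdős random graph process on $N\ge2$ nodes with noise level $\eta\in(0,1]$. Then in the Markov chain of states $x(k)\in\{\pm1\}^N$, the all-$(+1)$ state and the all-$(-1)$ state are absorbing, and every other state is transient.
   Context: Erdős random graph process: at each time $k$, the graph $G(k)$ on nodes $V=\{1,\dots,N\}$ is a simple undirected graph in which each of the $N(N-1)/2$ possible edges is present independently with probability $1/2$; graphs at different times are independent, and independent of the noises and of $x(0)$. Each node carries $x_i(k)\in\{+1,-1\}$. The neighborhood $N_i(k)$ consists of $i$ and all nodes adjacent to $i$ in $G(k)$; $v_i(k)=\frac{1}{|N_i(k)|}\sum_{j\in N_i(k)}x_j(k)$. Update: $x_i(k+1)=\operatorname{sign}[v_i(k)+\xi_i(k)]$ with $\xi_i(k)$ i.i.d. uniform on $[-\eta,\eta]$ across $i,k$. A state is absorbing if its one-step transition probability to itself is one; transient if, starting from it, it reappears with probability strictly less than one. *)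

theory Defs
  imports "HOL-Analysis.Analysis"
begin

definition states :: "nat \<Rightarrow> (nat \<Rightarrow> real) set" where
  "states N = {x. (\<forall>i<N. x i = 1 \<or> x i = -1) \<and> (\<forall>i\<ge>N. x i = 0)}"

definition all_plus :: "nat \<Rightarrow> nat \<Rightarrow> real" where
  "all_plus N = (\<lambda>i. if i < N then 1 else 0)"

definition all_minus :: "nat \<Rightarrow> nat \<Rightarrow> real" where
  "all_minus N = (\<lambda>i. if i < N then -1 else 0)"

text \<open>A graph is a subset of these; under the Erdos random graph each of them is
  present independently with probability 1/2, so every graph has probability
  (1/2)^(number of possible edges).\<close>

definition pairs :: "nat \<Rightarrow> nat set set" where
  "pairs N = {{i, j} | i j. i < N \<and> j < N \<and> i \<noteq> j}"

definition nbhd :: "nat \<Rightarrow> nat set set \<Rightarrow> nat \<Rightarrow> nat set" where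
  "nbhd N G i = insert i {j. j < N \<and> {i, j} \<in> G}"

definition avg :: "nat \<Rightarrow> nat set set \<Rightarrow> (nat \<Rightarrow> real) \<Rightarrow> nat \<Rightarrow> real" where
  "avg N G x i = (\<Sum>j\<in>nbhd N G i. x j) / real (card (nbhd N G i))"

definition noise_prob :: "real \<Rightarrow> real \<Rightarrow> real \<Rightarrow> real" where
  "noise_prob \<eta> v s = measure lborel {\<xi> \<in> {-\<eta>..\<eta>}. sgn (v + \<xi>) = s} / (2 * \<eta>)"

definition trans :: "nat \<Rightarrow> real \<Rightarrow> (nat \<Rightarrow> real) \<Rightarrow> (nat \<Rightarrow> real) \<Rightarrow> real" where
  "trans N \<eta> x y =
     (\<Sum>G\<in>Pow (pairs N). (1/2) ^ card (pairs N) *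
        (\<Prod>i<N. noise_prob \<eta> (avg N G x i) (y i)))"

definition absorbing :: "nat \<Rightarrow> real \<Rightarrow> (nat \<Rightarrow> real) \<Rightarrow> bool" where
  "absorbing N \<eta> x \<longleftrightarrow> trans N \<eta> x x = 1"

text \<open>first_visit N eta x n y: probability, starting from x at time 0, of being
  at y at time n+1 without having visited x at times 1..n (taboo probability).
  first_visit N eta x n x is the probability of first return to x at time n+1.\<close>

fun first_visit :: "nat \<Rightarrow> real \<Rightarrow> (nat \<Rightarrow> real) \<Rightarrow> nat \<Rightarrow> (nat \<Rightarrow> real) \<Rightarrow> real" where
  "first_visit N \<eta> x 0 y = trans N \<eta> x y"
| "first_visit N \<eta> x (Suc n) y =
     (\<Sum>z\<in>states N - {x}. first_visit N \<eta> x n z * trans N \<eta> z y)"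

definition return_prob :: "nat \<Rightarrow> real \<Rightarrow> (nat \<Rightarrow> real) \<Rightarrow> real" where
  "return_prob N \<eta> x = (\<Sum>n. first_visit N \<eta> x n x)"

definition transient :: "nat \<Rightarrow> real \<Rightarrow> (nat \<Rightarrow> real) \<Rightarrow> bool" where
  "transient N \<eta> x \<longleftrightarrow> summable (\<lambda>n. first_visit N \<eta> x n x) \<and> return_prob N \<eta> x < 1"

end

theory Submission
  imports Defs
begin

(* The transition kernel averages, over all graphs G, a product of
   per-node noise probabilities.
   (1) Noise: for eta > 0 the two sign probabilities sum to 1, a sign opposite to
       v is impossible once |v| >= eta, and the sign of v itself has positive
       probability.  Hence for eta <= 1 a consensus state is reproduced with
       probability 1 (all neighbourhood averages equal the common value +-1):
       the two consensus states are absorbing.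
   (2) Summing a product-form function over the state space factorises, so the
       kernel is stochastic (rows sum to 1).
   (3) The complete graph has positive weight; under it every node averages the
       global mean m, so the consensus state with the sign of m is reached in one
       step with positive probability.
   (4) Markov chain step: for a stochastic kernel, the first-return probabilities
       of x plus the mass still away from x sum to 1; if x reaches an absorbing
       state c <> x with probability p > 0, that mass stays >= p, so the return
       probability is <= 1 - p < 1, i.e. x is transient.
   The argument works for every N. *)

section \<open>The noise model\<close>

lemma noise_prob_signs:
  fixes \<eta> v :: real
  shows "noise_prob \<eta> v 1 = measure lborel ({-\<eta>..\<eta>} \<inter> {-v<..}) / (2 * \<eta>)"
    and "noise_prob \<eta> v (-1) = measure lborel ({-\<eta>..\<eta>} \<inter> {..< -v}) / (2 * \<eta>)"
proof -
  have "{\<xi> \<in> {-\<eta>..\<eta>}. sgn (v + \<xi>) = 1} = {-\<eta>..\<eta>} \<inter> {-v<..}"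
       "{\<xi> \<in> {-\<eta>..\<eta>}. sgn (v + \<xi>) = -1} = {-\<eta>..\<eta>} \<inter> {..< -v}"
    by (auto simp: sgn_if)
  then show "noise_prob \<eta> v 1 = measure lborel ({-\<eta>..\<eta>} \<inter> {-v<..}) / (2 * \<eta>)"
    and "noise_prob \<eta> v (-1) = measure lborel ({-\<eta>..\<eta>} \<inter> {..< -v}) / (2 * \<eta>)"
    unfolding noise_prob_def by simp_all
qed

lemma fmeasurable_interval: "{a..b::real} \<in> fmeasurable lborel"
  using fmeasurable_cbox[of a b] by simp

lemma noise_prob_nonneg: "0 < \<eta> \<Longrightarrow> 0 \<le> noise_prob \<eta> v s"
  by (simp add: noise_prob_def)

text \<open>The two signs exhaust the noise: the tie event \<open>v + \<xi> = 0\<close> is a null set.\<close>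

lemma noise_prob_sum:
  fixes \<eta> v :: real assumes "0 < \<eta>"
  shows "noise_prob \<eta> v 1 + noise_prob \<eta> v (-1) = 1"
proof -
  let ?I = "{-\<eta>..\<eta>}"
  let ?A = "?I \<inter> {-v<..}" and ?B = "?I \<inter> {..< -v}"
  have fA: "?A \<in> fmeasurable lborel"
    by (rule fmeasurable_Int_fmeasurable[OF fmeasurable_interval]) auto
  have fB: "?B \<in> fmeasurable lborel"
    by (rule fmeasurable_Int_fmeasurable[OF fmeasurable_interval]) auto
  have split: "measure lborel (?A \<union> ?B) = measure lborel ?A + measure lborel ?B"
    using fA fB by (intro measure_Union) (auto simp: fmeasurable_def)
  have tie_null: "measure lborel ((?A \<union> ?B) \<union> {-v}) = measure lborel (?A \<union> ?B)"
    by (rule measure_Un_null_set) (auto intro: finite_imp_null_set_lborel)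
  have "?I = ?A \<union> ?B \<or> ?I = (?A \<union> ?B) \<union> {-v}" by auto
  then have "measure lborel (?A \<union> ?B) = measure lborel ?I" using tie_null by metis
  also have "\<dots> = 2 * \<eta>" using assms by simp
  finally have whole: "measure lborel (?A \<union> ?B) = 2 * \<eta>" .
  show ?thesis using assms split whole
    unfolding noise_prob_signs by (simp add: add_divide_distrib[symmetric])
qed

lemma noise_prob_flip_impossible:
  assumes "0 < \<eta>" "s \<in> {1, -1}" "\<eta> \<le> s * v"
  shows "noise_prob \<eta> v (-s) = 0"
proof -
  consider "s = 1" | "s = -1" using assms(2) by blast
  then show ?thesis
  proof cases
    case 1
    then have "{-\<eta>..\<eta>} \<inter> {..< -v} = {}" using assms by auto
    then show ?thesis using 1 by (simp add: noise_prob_signs)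
  next
    case 2
    then have "{-\<eta>..\<eta>} \<inter> {-v<..} = {}" using assms by auto
    then show ?thesis using 2 by (simp add: noise_prob_signs)
  qed
qed

lemma noise_prob_certain:
  assumes "0 < \<eta>" "\<eta> \<le> 1" "s \<in> {1, -1}"
  shows "noise_prob \<eta> s s = 1"
proof -
  have "noise_prob \<eta> s (-s) = 0"
    using assms by (intro noise_prob_flip_impossible) auto
  then show ?thesis using noise_prob_sum[OF assms(1), of s] assms(3) by auto
qed

text \<open>The sign of \<open>v\<close> (either sign if \<open>v = 0\<close>) is produced with positive probability:
  a quarter of the noise interval pushes \<open>v + \<xi>\<close> strictly to that side.\<close>

lemma noise_prob_pos:
  assumes "0 < \<eta>" "s \<in> {1, -1}" "0 \<le> s * v"
  shows "0 < noise_prob \<eta> v s"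
proof -
  define J where "J = (if s = 1 then {\<eta>/2..\<eta>} else {-\<eta>..-\<eta>/2})"
  define E where "E = (if s = 1 then {-\<eta>..\<eta>} \<inter> {-v<..} else {-\<eta>..\<eta>} \<inter> {..< -v})"
  have "J \<subseteq> E" using assms by (auto simp: J_def E_def)
  moreover have "E \<in> fmeasurable lborel"
    unfolding E_def by (auto intro: fmeasurable_Int_fmeasurable[OF fmeasurable_interval])
  ultimately have "measure lborel J \<le> measure lborel E"
    by (intro measure_mono_fmeasurable) (auto simp: J_def)
  moreover have "measure lborel J = \<eta>/2" using assms by (simp add: J_def)
  moreover have "noise_prob \<eta> v s = measure lborel E / (2 * \<eta>)"
    using assms(2) by (auto simp: noise_prob_signs E_def)
  ultimately show ?thesis using assms by simp
qed

section \<open>The state space\<close>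

lemma states_0: "states 0 = {\<lambda>_. 0}"
  by (auto simp: states_def)

lemma states_Suc: "states (Suc n) = (\<lambda>(y,s). y(n:=s)) ` (states n \<times> {1,-1})"
proof (intro equalityI subsetI)
  fix x assume x: "x \<in> states (Suc n)"
  have "x(n:=0) \<in> states n" "x n \<in> {1,-1}" using x by (auto simp: states_def)
  moreover have "x = (x(n:=0))(n := x n)" by simp
  ultimately show "x \<in> (\<lambda>(y,s). y(n:=s)) ` (states n \<times> {1,-1})"
    by (intro image_eqI[where x="(x(n:=0), x n)"]) auto
next
  fix x assume "x \<in> (\<lambda>(y,s). y(n:=s)) ` (states n \<times> {1,-1})"
  then show "x \<in> states (Suc n)" by (auto simp: states_def less_Suc_eq)
qed

lemma states_Suc_inj: "inj_on (\<lambda>(y,s). y(n:=s)) (states n \<times> {1,-1::real})"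
proof (rule inj_onI, clarify)
  fix y s y' s' assume a: "y \<in> states n" "y' \<in> states n" "y(n:=s) = y'(n:=s')"
  then have "s = s'" by (metis fun_upd_same)
  moreover have "y = y'"
  proof
    fix i
    have "(y(n:=s)) i = (y'(n:=s')) i" using a(3) by simp
    then show "y i = y' i" using a(1,2) by (cases "i = n") (auto simp: states_def)
  qed
  ultimately show "y = y' \<and> s = s'" by simp
qed

lemma finite_states: "finite (states n)"
  by (induction n) (auto simp: states_0 states_Suc)

text \<open>Summing a product of per-node factors over all states factorises into a
  product of per-node sums; this is how independence of the noises is used.\<close>

lemma sum_states_prod:
  fixes f :: "nat \<Rightarrow> real \<Rightarrow> real"
  shows "(\<Sum>y\<in>states n. \<Prod>i<n. f i (y i)) = (\<Prod>i<n. f i 1 + f i (-1))"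
proof (induction n)
  case 0 then show ?case by (simp add: states_0)
next
  case (Suc n)
  have "(\<Sum>y\<in>states (Suc n). \<Prod>i<Suc n. f i (y i))
      = (\<Sum>p\<in>states n \<times> {1,-1}. \<Prod>i<Suc n. f i (fun_upd (fst p) n (snd p) i))"
    unfolding states_Suc by (subst sum.reindex[OF states_Suc_inj]) (simp add: case_prod_beta)
  also have "\<dots> = (\<Sum>p\<in>states n \<times> {1,-1}. (\<Prod>i<n. f i (fst p i)) * f n (snd p))"
    by (rule sum.cong[OF refl]) (auto simp: prod.lessThan_Suc intro!: prod.cong)
  also have "\<dots> = (\<Sum>y\<in>states n. \<Sum>s\<in>{1,-1}. (\<Prod>i<n. f i (y i)) * f n s)"
    using sum.cartesian_product[of "\<lambda>y s. (\<Prod>i<n. f i (y i)) * f n s" "{1,-1::real}" "states n"]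
    by (simp add: case_prod_beta)
  also have "\<dots> = (\<Sum>y\<in>states n. \<Prod>i<n. f i (y i)) * (f n 1 + f n (-1))"
    by (simp add: distrib_left sum_distrib_right sum.distrib)
  finally show ?case using Suc by simp
qed

lemma finite_pairs: "finite (pairs N)"
  by (rule finite_subset[of _ "Pow {..<N}"]) (auto simp: pairs_def)

lemma graph_weights_sum: "(\<Sum>G\<in>Pow (pairs N). (1/2::real) ^ card (pairs N)) = 1"
  using finite_pairs[of N] by (simp add: card_Pow power_one_over)

lemma trans_nonneg: "0 < \<eta> \<Longrightarrow> 0 \<le> trans N \<eta> x y"
  unfolding trans_def
  by (intro sum_nonneg mult_nonneg_nonneg prod_nonneg noise_prob_nonneg) auto

lemma trans_row_sum:
  assumes "0 < \<eta>" shows "(\<Sum>y\<in>states N. trans N \<eta> x y) = 1"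
proof -
  have "(\<Sum>y\<in>states N. trans N \<eta> x y)
     = (\<Sum>G\<in>Pow (pairs N). (1/2) ^ card (pairs N) *
          (\<Sum>y\<in>states N. \<Prod>i<N. noise_prob \<eta> (avg N G x i) (y i)))"
    unfolding trans_def by (subst sum.swap) (simp add: sum_distrib_left)
  also have "\<dots> = (\<Sum>G\<in>Pow (pairs N). (1/2::real) ^ card (pairs N))"
    by (intro sum.cong refl) (simp add: sum_states_prod[where f="\<lambda>i s. noise_prob \<eta> (avg N _ x i) s"]
        noise_prob_sum[OF assms])
  finally show ?thesis by (simp only: graph_weights_sum)
qed

lemma avg_const:
  assumes "i < N" "\<And>j. j < N \<Longrightarrow> x j = c"
  shows "avg N G x i = c"
proof -
  have sub: "nbhd N G i \<subseteq> {..<N}" using assms(1) by (auto simp: nbhd_def)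
  then have "finite (nbhd N G i)" by (rule finite_subset) simp
  moreover have "i \<in> nbhd N G i" by (simp add: nbhd_def)
  ultimately have "card (nbhd N G i) \<noteq> 0" by auto
  moreover have "(\<Sum>j\<in>nbhd N G i. x j) = real (card (nbhd N G i)) * c"
    using sub assms(2) by (simp add: subset_iff)
  ultimately show ?thesis by (simp add: avg_def)
qed

lemma consensus_absorbing:
  assumes "0 < \<eta>" "\<eta> \<le> 1" "s \<in> {1, -1}"
  shows "trans N \<eta> (\<lambda>i. if i < N then s else 0) (\<lambda>i. if i < N then s else 0) = 1"
proof -
  have "trans N \<eta> (\<lambda>i. if i < N then s else 0) (\<lambda>i. if i < N then s else 0)
      = (\<Sum>G\<in>Pow (pairs N). (1/2::real) ^ card (pairs N))"
    unfolding trans_def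
    by (intro sum.cong refl) (simp add: avg_const[where c=s] noise_prob_certain[OF assms])
  then show ?thesis by (simp only: graph_weights_sum)
qed

lemma nbhd_complete_graph: "i < N \<Longrightarrow> nbhd N (pairs N) i = {..<N}"
  by (auto simp: nbhd_def pairs_def doubleton_eq_iff)

lemma trans_ge_complete_graph:
  assumes "0 < \<eta>"
  shows "(1/2) ^ card (pairs N) * (\<Prod>i<N. noise_prob \<eta> (avg N (pairs N) x i) (y i))
           \<le> trans N \<eta> x y"
  unfolding trans_def
  by (rule member_le_sum[where f="\<lambda>G. (1/2) ^ card (pairs N) *
        (\<Prod>i<N. noise_prob \<eta> (avg N G x i) (y i))"])
     (auto intro!: mult_nonneg_nonneg prod_nonneg noise_prob_nonneg assms simp: finite_pairs)

text \<open>Under the complete graph every node sees the global mean \<open>m\<close>; choosing \<open>s\<close> as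
  the sign of \<open>m\<close>, all nodes adopt \<open>s\<close> with positive probability.\<close>

lemma reaches_consensus:
  assumes "0 < \<eta>"
  shows "\<exists>s\<in>{1, -1}. 0 < trans N \<eta> x (\<lambda>i. if i < N then s else 0)"
proof -
  define m where "m = (\<Sum>j<N. x j) / real N"
  define s :: real where "s = (if 0 \<le> m then 1 else -1)"
  have s: "s \<in> {1, -1}" "0 \<le> s * m" by (auto simp: s_def)
  have "avg N (pairs N) x i = m" if "i < N" for i
    using that by (simp add: avg_def nbhd_complete_graph m_def)
  moreover have "0 < noise_prob \<eta> m s" using noise_prob_pos[OF assms s] .
  ultimately have "0 < (1/2::real) ^ card (pairs N) *
      (\<Prod>i<N. noise_prob \<eta> (avg N (pairs N) x i) (if i < N then s else 0))"
    by (auto intro!: prod_pos)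
  then show ?thesis using trans_ge_complete_graph[OF assms] s(1) by (meson less_le_trans)
qed

section \<open>Reaching an absorbing state makes a state transient\<close>

lemma first_visit_nonneg: "0 < \<eta> \<Longrightarrow> 0 \<le> first_visit N \<eta> x n y"
  by (induction n arbitrary: y) (auto intro!: sum_nonneg mult_nonneg_nonneg trans_nonneg)

text \<open>Conservation of mass: by time \<open>M+1\<close> the chain has either returned to \<open>x\<close>
  (first return at some time \<open>\<le> M+1\<close>) or is at some \<open>z \<noteq> x\<close> without having returned.\<close>

lemma first_visit_mass:
  assumes "0 < \<eta>" "x \<in> states N"
  shows "(\<Sum>n<Suc M. first_visit N \<eta> x n x) + (\<Sum>z\<in>states N - {x}. first_visit N \<eta> x M z) = 1"
proof (induction M)
  case 0
  have "(\<Sum>z\<in>states N. trans N \<eta> x z) = trans N \<eta> x x + (\<Sum>z\<in>states N - {x}. trans N \<eta> x z)"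
    using assms(2) finite_states by (simp add: sum.remove)
  then show ?case using trans_row_sum[OF assms(1)] by simp
next
  case (Suc M)
  let ?S = "states N" and ?f = "first_visit N \<eta> x"
  have "(\<Sum>z\<in>?S. ?f (Suc M) z) = (\<Sum>w\<in>?S - {x}. ?f M w * (\<Sum>z\<in>?S. trans N \<eta> w z))"
    by (simp add: sum.swap[of _ ?S] sum_distrib_left)
  also have "\<dots> = (\<Sum>w\<in>?S - {x}. ?f M w)"
    by (simp add: trans_row_sum[OF assms(1)])
  finally have step: "(\<Sum>z\<in>?S. ?f (Suc M) z) = (\<Sum>w\<in>?S - {x}. ?f M w)" .
  have "(\<Sum>z\<in>?S. ?f (Suc M) z) = ?f (Suc M) x + (\<Sum>z\<in>?S - {x}. ?f (Suc M) z)"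
    using assms(2) finite_states by (simp add: sum.remove)
  then show ?case using Suc step by simp
qed

text \<open>Mass that enters an absorbing state \<open>c \<noteq> x\<close> never returns to \<open>x\<close>.\<close>

lemma first_visit_absorbing_lower:
  assumes "0 < \<eta>" "c \<in> states N" "c \<noteq> x" "trans N \<eta> c c = 1"
  shows "trans N \<eta> x c \<le> first_visit N \<eta> x M c"
proof (induction M)
  case 0 then show ?case by simp
next
  case (Suc M)
  have "first_visit N \<eta> x M c * trans N \<eta> c c
     \<le> (\<Sum>w\<in>states N - {x}. first_visit N \<eta> x M w * trans N \<eta> w c)"
    by (rule member_le_sum[where f="\<lambda>w. first_visit N \<eta> x M w * trans N \<eta> w c"])
       (use assms in \<open>auto intro!: mult_nonneg_nonneg first_visit_nonneg trans_nonneg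
          simp: finite_states\<close>)
  then show ?case using Suc assms(4) by simp
qed

lemma transient_if_reaches_absorbing:
  assumes "0 < \<eta>" "x \<in> states N" "c \<in> states N" "c \<noteq> x" "trans N \<eta> c c = 1"
    and reach: "0 < trans N \<eta> x c"
  shows "transient N \<eta> x"
proof -
  let ?f = "\<lambda>n. first_visit N \<eta> x n x" and ?p = "trans N \<eta> x c"
  have away: "?p \<le> (\<Sum>z\<in>states N - {x}. first_visit N \<eta> x M z)" for M
  proof -
    have "first_visit N \<eta> x M c \<le> (\<Sum>z\<in>states N - {x}. first_visit N \<eta> x M z)"
      by (rule member_le_sum) (use assms in \<open>auto intro: first_visit_nonneg simp: finite_states\<close>)
    then show ?thesis using first_visit_absorbing_lower[OF assms(1,3,4,5), of M] by simp
  qed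
  have partial: "sum ?f {..<n} \<le> 1 - ?p" for n
  proof (cases n)
    case 0
    have "0 \<le> sum ?f {..<Suc 0}" by (intro sum_nonneg first_visit_nonneg assms)
    then show ?thesis using 0 first_visit_mass[OF assms(1,2), of 0] away[of 0] by simp
  next
    case (Suc M)
    then show ?thesis using first_visit_mass[OF assms(1,2), of M] away[of M] by simp
  qed
  have sm: "summable ?f"
    by (rule summableI_nonneg_bounded[OF first_visit_nonneg[OF assms(1)] partial])
  have "return_prob N \<eta> x \<le> 1 - ?p"
    unfolding return_prob_def by (rule suminf_le_const[OF sm partial])
  then show ?thesis using sm reach by (simp add: transient_def)
qed

theorem lemma3:
  fixes N :: nat and \<eta> :: real
  assumes "N \<ge> 2" and "0 < \<eta>" and "\<eta> \<le> 1"
  shows "absorbing N \<eta> (all_plus N) \<and> absorbing N \<eta> (all_minus N) \<and>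
         (\<forall>x\<in>states N. x \<noteq> all_plus N \<and> x \<noteq> all_minus N \<longrightarrow> transient N \<eta> x)"
proof (intro conjI ballI impI)
  have consensus: "all_plus N = (\<lambda>i. if i < N then 1 else 0)"
    "all_minus N = (\<lambda>i. if i < N then -1 else 0)"
    by (simp_all add: all_plus_def all_minus_def)
  show "absorbing N \<eta> (all_plus N)" "absorbing N \<eta> (all_minus N)"
    using consensus_absorbing[OF assms(2,3)] by (simp_all add: absorbing_def consensus)
  fix x assume x: "x \<in> states N" and not_consensus: "x \<noteq> all_plus N \<and> x \<noteq> all_minus N"
  obtain s :: real where s: "s \<in> {1, -1}" and
    reach: "0 < trans N \<eta> x (\<lambda>i. if i < N then s else 0)"
    using reaches_consensus[OF assms(2)] by blast
  have "(\<lambda>i. if i < N then s else 0) \<in> states N" using s by (auto simp: states_def)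
  moreover have "(\<lambda>i. if i < N then s else 0) \<noteq> x" using s not_consensus consensus by auto
  ultimately show "transient N \<eta> x"
    using transient_if_reaches_absorbing[OF assms(2) x _ _ consensus_absorbing[OF assms(2,3) s] reach]
    by blast
qed

end
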